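(* Let $\mathbf{s}_1,\dots,\mathbf{s}_l\in\mathbb{Q}^n$, let $\mathcal P$ be the convex hull of $\bigcup_{i=1}^l(\mathbf{s}_i+\mathbb{R}_{\le0}^n)$, $P=\mathcal P\cap\mathbb{Q}^n$, and fix a monomial order $\le_m$. For every $f\in K\{\mathbf{X};P\}$, the set $$\mathrm{Terms}_P(\langle f\rangle)=\{\mathrm{LT}_{\mathbf{r}}(\langle f\rangle):\mathbf{r}\in P\}$$ is finite, where $\langle f\rangle=f\,K\{\mathbf{X};P\}$.
   Context: $K$ is a field complete for a discrete valuation $\mathrm{val}$. For $\mathbf{r}\in\mathbb{Q}^n$, $\mathrm{val}_{\mathbf{r}}(a\mathbf{X}^\alpha)=\mathrm{val}(a)-\mathbf{r}\cdot\alpha$. $K\{\mathbf{X};P\}$ is the set of power series $\sum_{\alpha\in\mathbb{N}^n}a_\alpha\mathbf{X}^\alpha$ such that for every $\mathbf{r}\in P$, $\mathrm{val}_{\mathbf{r}}(a_\alpha\mathbf{X}^\alpha)\to+\infty$ as $|\alpha|\to\infty$. For $\mathbf{r}\in P$ and a nonzero $g\in K\{\mathbf{X};P\}$, $\mathrm{LT}_{\mathbf{r}}(g)$ is the largest term of $g$ for the order $a\mathbf{X}^\alpha<b\mathbf{X}^\beta$ iff $\mathrm{val}_{\mathbf{r}}(a\mathbf{X}^\alpha)>\mathrm{val}_{\mathbf{r}}(b\mathbf{X}^\beta)$, or equal and $\mathbf{X}^\alpha<_m\mathbf{X}^\beta$. For an ideal $J$ of $K\{\mathbf{X};P\}$,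 $\mathrm{LT}_{\mathbf{r}}(J)$ is the ideal of $K[\mathbf{X}]$ generated by $\{\mathrm{LT}_{\mathbf{r}}(g): g\in J\setminus\{0\}\}$. *)

theory Defs
  imports "HOL-Analysis.Analysis" "HOL-Library.Poly_Mapping"
begin

text \<open>Discrete valuation on a field (value group Z, normalized), val of 0 is +infinity
  and is never used: all conditions are stated for nonzero elements.\<close>
definition discrete_valuation :: "('k::field \<Rightarrow> int) \<Rightarrow> bool" where
  "discrete_valuation val \<longleftrightarrow>
     (\<forall>x y. x \<noteq> 0 \<longrightarrow> y \<noteq> 0 \<longrightarrow> val (x * y) = val x + val y) \<and>
     (\<forall>x y. x \<noteq> 0 \<longrightarrow> y \<noteq> 0 \<longrightarrow> x + y \<noteq> 0 \<longrightarrow> val (x + y) \<ge> min (val x) (val y)) \<and>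
     (\<exists>x. x \<noteq> 0 \<and> val x = 1)"

text \<open>Completeness: every val-Cauchy sequence converges (d(x,y) small iff x = y or val(x-y) large).\<close>
definition val_complete :: "('k::field \<Rightarrow> int) \<Rightarrow> bool" where
  "val_complete val \<longleftrightarrow>
     (\<forall>x :: nat \<Rightarrow> 'k.
        (\<forall>M. \<exists>N. \<forall>m\<ge>N. \<forall>k\<ge>N. x m = x k \<or> val (x m - x k) \<ge> M) \<longrightarrow>
        (\<exists>L. \<forall>M. \<exists>N. \<forall>m\<ge>N. x m = L \<or> val (x m - L) \<ge> M))"

definition monomial_order :: "(('n \<Rightarrow>\<^sub>0 nat) \<Rightarrow> ('n \<Rightarrow>\<^sub>0 nat) \<Rightarrow> bool) \<Rightarrow> bool" where
  "monomial_order le \<longleftrightarrow>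
     (\<forall>a. le a a) \<and> (\<forall>a b. le a b \<longrightarrow> le b a \<longrightarrow> a = b) \<and>
     (\<forall>a b c. le a b \<longrightarrow> le b c \<longrightarrow> le a c) \<and> (\<forall>a b. le a b \<or> le b a) \<and>
     (\<forall>a b c. le a b \<longrightarrow> le (a + c) (b + c)) \<and> (\<forall>a. le 0 a)"

type_synonym ('n, 'k) pseries = "('n \<Rightarrow>\<^sub>0 nat) \<Rightarrow> 'k"

definition dotp :: "('n::finite \<Rightarrow> rat) \<Rightarrow> ('n \<Rightarrow>\<^sub>0 nat) \<Rightarrow> rat" where
  "dotp r \<alpha> = (\<Sum>v\<in>UNIV. r v * of_nat (Poly_Mapping.lookup \<alpha> v))"

text \<open>val_r(a X^alpha) = val a - r . alpha  (for a nonzero)\<close>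
definition val_r :: "('k \<Rightarrow> int) \<Rightarrow> ('n::finite \<Rightarrow> rat) \<Rightarrow> 'k \<Rightarrow> ('n \<Rightarrow>\<^sub>0 nat) \<Rightarrow> rat" where
  "val_r val r a \<alpha> = of_int (val a) - dotp r \<alpha>"

definition total_deg :: "('n::finite \<Rightarrow>\<^sub>0 nat) \<Rightarrow> nat" where
  "total_deg \<alpha> = (\<Sum>v\<in>UNIV. Poly_Mapping.lookup \<alpha> v)"

text \<open>K{X;P}: val_r of the terms tends to +infinity for every r in P (zero terms have val +infinity).\<close>
definition conv_series :: "('k::field \<Rightarrow> int) \<Rightarrow> ('n::finite \<Rightarrow> rat) set \<Rightarrow> ('n, 'k) pseries set" where
  "conv_series val P = {f. \<forall>r\<in>P. \<forall>M::rat. \<exists>N. \<forall>\<alpha>. total_deg \<alpha> \<ge> N \<longrightarrow> f \<alpha> \<noteq> 0 \<longrightarrow>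
        val_r val r (f \<alpha>) \<alpha> > M}"

definition ps_mult :: "('n, 'k::field) pseries \<Rightarrow> ('n, 'k) pseries \<Rightarrow> ('n, 'k) pseries" where
  "ps_mult f g = (\<lambda>\<gamma>. \<Sum>p\<in>{(\<alpha>, \<beta>). \<alpha> + \<beta> = \<gamma>}. f (fst p) * g (snd p))"

definition principal_ideal :: "('k::field \<Rightarrow> int) \<Rightarrow> ('n::finite \<Rightarrow> rat) set \<Rightarrow> ('n, 'k) pseries \<Rightarrow> ('n, 'k) pseries set" where
  "principal_ideal val P f = {ps_mult f h | h. h \<in> conv_series val P}"

definition lt_exp :: "('k::field \<Rightarrow> int) \<Rightarrow> (('n \<Rightarrow>\<^sub>0 nat) \<Rightarrow> ('n \<Rightarrow>\<^sub>0 nat) \<Rightarrow> bool) \<Rightarrow>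
     ('n::finite \<Rightarrow> rat) \<Rightarrow> ('n, 'k) pseries \<Rightarrow> ('n \<Rightarrow>\<^sub>0 nat)" where
  "lt_exp val le r g = (THE \<alpha>. g \<alpha> \<noteq> 0 \<and> (\<forall>\<beta>. g \<beta> \<noteq> 0 \<longrightarrow>
       val_r val r (g \<beta>) \<beta> > val_r val r (g \<alpha>) \<alpha> \<or>
       (val_r val r (g \<beta>) \<beta> = val_r val r (g \<alpha>) \<alpha> \<and> le \<beta> \<alpha>)))"

definition LT :: "('k::field \<Rightarrow> int) \<Rightarrow> (('n \<Rightarrow>\<^sub>0 nat) \<Rightarrow> ('n \<Rightarrow>\<^sub>0 nat) \<Rightarrow> bool) \<Rightarrow>
     ('n::finite \<Rightarrow> rat) \<Rightarrow> ('n, 'k) pseries \<Rightarrow> (('n \<Rightarrow>\<^sub>0 nat) \<Rightarrow>\<^sub>0 'k)" where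
  "LT val le r g = Poly_Mapping.single (lt_exp val le r g) (g (lt_exp val le r g))"

definition ideal_gen :: "'a::comm_ring_1 set \<Rightarrow> 'a set" where
  "ideal_gen S = {x. \<exists>F c. finite F \<and> F \<subseteq> S \<and> x = (\<Sum>g\<in>F. c g * g)}"

definition LT_ideal :: "('k::field \<Rightarrow> int) \<Rightarrow> (('n \<Rightarrow>\<^sub>0 nat) \<Rightarrow> ('n \<Rightarrow>\<^sub>0 nat) \<Rightarrow> bool) \<Rightarrow>
     ('n::finite \<Rightarrow> rat) \<Rightarrow> ('n, 'k) pseries set \<Rightarrow> (('n \<Rightarrow>\<^sub>0 nat) \<Rightarrow>\<^sub>0 'k) set" where
  "LT_ideal val le r J = ideal_gen {LT val le r g | g. g \<in> J \<and> g \<noteq> (\<lambda>_. 0)}"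

definition polyhedron :: "nat \<Rightarrow> (nat \<Rightarrow> 'n::finite \<Rightarrow> rat) \<Rightarrow> (real ^ 'n) set" where
  "polyhedron l s = convex hull (\<Union>i\<in>{..<l}. {(\<chi> v. of_rat (s i v)) + d | d. \<forall>v. d $ v \<le> 0})"

definition rat_points :: "(real ^ 'n::finite) set \<Rightarrow> ('n \<Rightarrow> rat) set" where
  "rat_points A = {r. (\<chi> v. of_rat (r v)) \<in> A}"

end

theory Submission
  imports Defs
begin

text \<open>
  For r in P the leading term of a product is the product of the leading terms, so LT_r(<f>) is
  the monomial ideal generated by X^\<alpha> with \<alpha> = lt_exp r f, and it suffices to show that only
  finitely many such exponents occur. If infinitely many did, Dickson's lemma would give infinitely
  many of them, each componentwise above one of them, \<beta>. Write such an \<alpha>, the leading exponent at r,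
  as \<beta> + \<delta> with \<delta> \<ge> 0. Since P lies in the convex hull of the orthants s_i + R_{\<le>0}^n, some
  vertex satisfies r \<cdot> \<delta> \<le> s_i \<cdot> \<delta>, and minimality of the \<alpha>-term for val_r turns into
  val_{s_i}(f_\<alpha> X^\<alpha>) \<le> val_{s_i}(f_\<beta> X^\<beta>). As f converges at each s_i \<in> P, only finitely many
  terms satisfy such a bound.
\<close>

lemma dotp_add: "dotp r (a + b) = dotp r a + dotp r b"
  by (simp add: dotp_def lookup_add algebra_simps sum.distrib)

lemma total_deg_add: "total_deg (a + b) = total_deg a + total_deg b"
  by (simp add: total_deg_def lookup_add sum.distrib)

lemma finite_total_deg_less: "finite {a :: 'n::finite \<Rightarrow>\<^sub>0 nat. total_deg a < N}"
proof -
  let ?S = "{a :: 'n \<Rightarrow>\<^sub>0 nat. total_deg a < N}"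
  have "Poly_Mapping.lookup a v \<le> total_deg a" for a :: "'n \<Rightarrow>\<^sub>0 nat" and v
    unfolding total_deg_def by (rule member_le_sum) auto
  then have "Poly_Mapping.lookup ` ?S \<subseteq> Pi\<^sub>E UNIV (\<lambda>_. {..<N})"
    by (auto simp: PiE_UNIV_domain intro: le_less_trans)
  then have "finite (Poly_Mapping.lookup ` ?S)"
    by (rule finite_subset) (rule finite_PiE, auto)
  moreover have "inj_on Poly_Mapping.lookup ?S"
    by (auto simp: inj_on_def intro: poly_mapping_eqI)
  ultimately show ?thesis by (rule finite_imageD)
qed

lemma finite_add_decompositions: "finite {(a, b). a + b = (c :: 'n::finite \<Rightarrow>\<^sub>0 nat)}"
proof (rule finite_subset)
  let ?A = "{a :: 'n \<Rightarrow>\<^sub>0 nat. total_deg a < Suc (total_deg c)}"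
  show "{(a, b). a + b = c} \<subseteq> ?A \<times> ?A"
    by (auto simp: total_deg_add)
  show "finite (?A \<times> ?A)"
    by (intro finite_cartesian_product finite_total_deg_less)
qed

lemma add_diff_of_lookup_le:
  fixes a b :: "'n \<Rightarrow>\<^sub>0 nat"
  assumes "\<forall>v. Poly_Mapping.lookup a v \<le> Poly_Mapping.lookup b v"
  shows "b = a + (b - a)"
  by (rule poly_mapping_eqI) (simp add: lookup_add lookup_minus assms[rule_format])

section \<open>Discrete valuations and monomial orders\<close>

context
  fixes val :: "'k::field \<Rightarrow> int"
  assumes val: "discrete_valuation val"
begin

lemma discrete_valuation_mult: "x \<noteq> 0 \<Longrightarrow> y \<noteq> 0 \<Longrightarrow> val (x * y) = val x + val y"
  using val by (simp add: discrete_valuation_def)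

lemma discrete_valuation_add:
  "x \<noteq> 0 \<Longrightarrow> y \<noteq> 0 \<Longrightarrow> x + y \<noteq> 0 \<Longrightarrow> min (val x) (val y) \<le> val (x + y)"
  using val by (simp add: discrete_valuation_def)

lemma discrete_valuation_minus: "val (- x) = val x"
proof (cases "x = 0")
  case False
  have "val 1 = 0"
    using discrete_valuation_mult[of 1 1] by simp
  moreover have "val ((- 1) * (- 1)) = val (- 1) + val (- 1)"
    by (rule discrete_valuation_mult) simp_all
  ultimately have "val (- 1) = 0" by simp
  moreover have "val ((- 1) * x) = val (- 1) + val x"
    using False by (intro discrete_valuation_mult) simp_all
  ultimately show ?thesis by simp
qed simp

lemma discrete_valuation_sum_greater:
  assumes "finite I" and "\<forall>i\<in>I. y i = 0 \<or> t < val (y i)"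
  shows "sum y I = 0 \<or> t < val (sum y I)"
  using assms
proof (induction I rule: finite_induct)
  case (insert i I)
  then have IH: "sum y I = 0 \<or> t < val (sum y I)" and yi: "y i = 0 \<or> t < val (y i)"
    by auto
  show ?case
  proof (cases "y i = 0 \<or> sum y I = 0 \<or> y i + sum y I = 0")
    case True
    then show ?thesis using IH yi insert.hyps by auto
  next
    case False
    then have "min (val (y i)) (val (sum y I)) \<le> val (y i + sum y I)"
      by (intro discrete_valuation_add) auto
    then show ?thesis using False IH yi insert.hyps by auto
  qed
qed simp

lemma discrete_valuation_sum_witness:
  assumes "finite I" and "sum y I \<noteq> 0"
  shows "\<exists>i\<in>I. y i \<noteq> 0 \<and> val (y i) \<le> val (sum y I)"
  using discrete_valuation_sum_greater[OF assms(1), of y "val (sum y I)"] assms(2)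
  by force

lemma discrete_valuation_add_dominant:
  assumes x: "x \<noteq> 0" and y: "y = 0 \<or> val x < val y"
  shows "x + y \<noteq> 0 \<and> val (x + y) = val x"
proof (cases "y = 0")
  case False
  with y have less: "val x < val y" by simp
  have sum_ne: "x + y \<noteq> 0"
  proof
    assume "x + y = 0"
    then have "y = - x" by (simp add: add_eq_0_iff)
    with less show False by (simp add: discrete_valuation_minus)
  qed
  have "min (val x) (val y) \<le> val (x + y)"
    using x False sum_ne by (rule discrete_valuation_add)
  moreover have "min (val (x + y)) (val (- y)) \<le> val ((x + y) + - y)"
    using sum_ne False x by (intro discrete_valuation_add) auto
  ultimately show ?thesis
    using less sum_ne by (simp add: discrete_valuation_minus)
qed (use x in simp)

lemma val_r_mult:
  "x \<noteq> 0 \<Longrightarrow> y \<noteq> 0 \<Longrightarrow> val_r val r (x * y) (a + b) = val_r val r x a + val_r val r y b"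
  by (simp add: val_r_def dotp_add discrete_valuation_mult)

end

context
  fixes le :: "('n \<Rightarrow>\<^sub>0 nat) \<Rightarrow> ('n \<Rightarrow>\<^sub>0 nat) \<Rightarrow> bool"
  assumes mo: "monomial_order le"
begin

lemma monomial_order_refl: "le a a"
  using mo by (simp add: monomial_order_def)

lemma monomial_order_antisym: "le a b \<Longrightarrow> le b a \<Longrightarrow> a = b"
  using mo by (simp add: monomial_order_def)

lemma monomial_order_trans: "le a b \<Longrightarrow> le b c \<Longrightarrow> le a c"
  using mo unfolding monomial_order_def by (elim conjE allE impE)

lemma monomial_order_linear: "le a b \<or> le b a"
  using mo by (simp add: monomial_order_def)

lemma monomial_order_add_right_mono: "le a b \<Longrightarrow> le (a + c) (b + c)"
  using mo by (simp add: monomial_order_def)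

lemma monomial_order_add_left_mono: "le b b' \<Longrightarrow> le (a + b) (a + b')"
  using monomial_order_add_right_mono[of b b' a] by (simp add: add.commute)

lemma monomial_order_add_mono: "le a a' \<Longrightarrow> le b b' \<Longrightarrow> le (a + b) (a' + b')"
  by (blast intro: monomial_order_trans monomial_order_add_right_mono monomial_order_add_left_mono)

lemma monomial_order_add_mono_cancel:
  assumes "le a a'" "le b b'" "a + b = a' + b'"
  shows "a = a' \<and> b = b'"
proof -
  have "le (a' + b') (a' + b)"
    using monomial_order_add_right_mono[OF assms(1), of b] assms(3) by simp
  with monomial_order_add_left_mono[OF assms(2)] have "b = b'"
    by (auto dest: monomial_order_antisym)
  then show ?thesis using assms(3) by simp
qed

end

section \<open>Leading exponents\<close>

definition is_lt_exp :: "('k::field \<Rightarrow> int) \<Rightarrow> (('n \<Rightarrow>\<^sub>0 nat) \<Rightarrow> ('n \<Rightarrow>\<^sub>0 nat) \<Rightarrow> bool) \<Rightarrow>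
     ('n::finite \<Rightarrow> rat) \<Rightarrow> ('n, 'k) pseries \<Rightarrow> ('n \<Rightarrow>\<^sub>0 nat) \<Rightarrow> bool" where
  "is_lt_exp val le r g \<alpha> \<longleftrightarrow> g \<alpha> \<noteq> 0 \<and> (\<forall>\<beta>. g \<beta> \<noteq> 0 \<longrightarrow>
       val_r val r (g \<alpha>) \<alpha> < val_r val r (g \<beta>) \<beta> \<or>
       (val_r val r (g \<beta>) \<beta> = val_r val r (g \<alpha>) \<alpha> \<and> le \<beta> \<alpha>))"

lemma is_lt_exp_nonzero: "is_lt_exp val le r g \<alpha> \<Longrightarrow> g \<alpha> \<noteq> 0"
  by (simp add: is_lt_exp_def)

lemma is_lt_exp_cases:
  "is_lt_exp val le r g \<alpha> \<Longrightarrow> g \<beta> \<noteq> 0 \<Longrightarrow> val_r val r (g \<alpha>) \<alpha> < val_r val r (g \<beta>) \<beta> \<or>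
     (val_r val r (g \<beta>) \<beta> = val_r val r (g \<alpha>) \<alpha> \<and> le \<beta> \<alpha>)"
  unfolding is_lt_exp_def by blast

lemma is_lt_exp_minimal:
  "is_lt_exp val le r g \<alpha> \<Longrightarrow> g \<beta> \<noteq> 0 \<Longrightarrow> val_r val r (g \<alpha>) \<alpha> \<le> val_r val r (g \<beta>) \<beta>"
  using is_lt_exp_cases[of val le r g \<alpha> \<beta>] by auto

lemma is_lt_exp_tie:
  "is_lt_exp val le r g \<alpha> \<Longrightarrow> g \<beta> \<noteq> 0 \<Longrightarrow> val_r val r (g \<beta>) \<beta> = val_r val r (g \<alpha>) \<alpha> \<Longrightarrow> le \<beta> \<alpha>"
  using is_lt_exp_cases[of val le r g \<alpha> \<beta>] by auto

lemma lt_exp_eqI: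
  assumes mo: "monomial_order le" and lt: "is_lt_exp val le r g \<alpha>"
  shows "lt_exp val le r g = \<alpha>"
proof -
  have "lt_exp val le r g = (THE \<alpha>. is_lt_exp val le r g \<alpha>)"
    by (simp add: lt_exp_def is_lt_exp_def)
  also have "\<dots> = \<alpha>"
  proof (rule the_equality)
    fix \<beta> assume lt': "is_lt_exp val le r g \<beta>"
    have "val_r val r (g \<beta>) \<beta> = val_r val r (g \<alpha>) \<alpha>"
      using is_lt_exp_minimal[OF lt is_lt_exp_nonzero[OF lt']]
        is_lt_exp_minimal[OF lt' is_lt_exp_nonzero[OF lt]] by simp
    then have "le \<beta> \<alpha>" "le \<alpha> \<beta>"
      using is_lt_exp_tie[OF lt is_lt_exp_nonzero[OF lt']]
        is_lt_exp_tie[OF lt' is_lt_exp_nonzero[OF lt]] by simp_all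
    then show "\<beta> = \<alpha>" by (rule monomial_order_antisym[OF mo])
  qed (rule lt)
  finally show ?thesis .
qed

lemma finite_val_r_le:
  assumes "f \<in> conv_series val P" and "r \<in> P"
  shows "finite {\<gamma>. f \<gamma> \<noteq> 0 \<and> val_r val r (f \<gamma>) \<gamma> \<le> c}"
proof -
  obtain N where N: "\<forall>\<alpha>. N \<le> total_deg \<alpha> \<longrightarrow> f \<alpha> \<noteq> 0 \<longrightarrow> c < val_r val r (f \<alpha>) \<alpha>"
    using assms unfolding conv_series_def by blast
  then have "{\<gamma>. f \<gamma> \<noteq> 0 \<and> val_r val r (f \<gamma>) \<gamma> \<le> c} \<subseteq> {\<alpha>. total_deg \<alpha> < N}"
    by (auto simp flip: not_le)
  then show ?thesis
    by (rule finite_subset) (rule finite_total_deg_less)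
qed

lemma finite_relation_greatest:
  assumes "finite T" "T \<noteq> {}" and total: "\<And>x y. R x y \<or> R y x"
    and trans: "\<And>x y z. R x y \<Longrightarrow> R y z \<Longrightarrow> R x z"
  shows "\<exists>a\<in>T. \<forall>b\<in>T. R b a"
  using assms(1,2)
proof (induction T rule: finite_ne_induct)
  case (singleton x)
  then show ?case using total[of x x] by auto
next
  case (insert x T)
  then obtain m where m: "m \<in> T" "\<forall>b\<in>T. R b m" by blast
  show ?case
  proof (cases "R x m")
    case True
    then show ?thesis using m by blast
  next
    case False
    then have "R m x" using total by blast
    then have "\<forall>b\<in>T. R b x" using m trans[of _ m x] by blast
    then show ?thesis using total[of x x] by blast
  qed
qed

lemma is_lt_exp_lt_exp:
  assumes mo: "monomial_order le" and f: "f \<in> conv_series val P" "r \<in> P" "f \<noteq> (\<lambda>_. 0)"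
  shows "is_lt_exp val le r f (lt_exp val le r f)"
proof -
  define v where "v \<beta> = val_r val r (f \<beta>) \<beta>" for \<beta>
  define R where "R \<beta> \<alpha> \<longleftrightarrow> v \<alpha> < v \<beta> \<or> (v \<beta> = v \<alpha> \<and> le \<beta> \<alpha>)" for \<beta> \<alpha>
  obtain \<beta>\<^sub>1 where \<beta>\<^sub>1: "f \<beta>\<^sub>1 \<noteq> 0" using f(3) by auto
  define T where "T = {\<beta>. f \<beta> \<noteq> 0 \<and> v \<beta> \<le> v \<beta>\<^sub>1}"
  have "finite T"
    unfolding T_def v_def using f(1,2) by (rule finite_val_r_le)
  moreover have "T \<noteq> {}"
    using \<beta>\<^sub>1 by (auto simp: T_def)
  moreover have "R \<beta> \<alpha> \<or> R \<alpha> \<beta>" for \<alpha> \<beta>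
    using monomial_order_linear[OF mo, of \<alpha> \<beta>] unfolding R_def by auto
  moreover have "R \<beta> \<gamma>" if "R \<beta> \<alpha>" "R \<alpha> \<gamma>" for \<alpha> \<beta> \<gamma>
    using that monomial_order_trans[OF mo, of \<beta> \<alpha> \<gamma>] unfolding R_def by auto
  ultimately have "\<exists>\<alpha>\<in>T. \<forall>\<beta>\<in>T. R \<beta> \<alpha>"
    by (rule finite_relation_greatest)
  then obtain \<alpha> where "\<alpha> \<in> T" "\<forall>\<beta>\<in>T. R \<beta> \<alpha>" ..
  then have "is_lt_exp val le r f \<alpha>"
    unfolding is_lt_exp_def
  proof (intro conjI allI impI)
    show "f \<alpha> \<noteq> 0" using \<open>\<alpha> \<in> T\<close> by (simp add: T_def)
    fix \<beta> assume "f \<beta> \<noteq> 0"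
    show "val_r val r (f \<alpha>) \<alpha> < val_r val r (f \<beta>) \<beta> \<or>
      (val_r val r (f \<beta>) \<beta> = val_r val r (f \<alpha>) \<alpha> \<and> le \<beta> \<alpha>)"
    proof (cases "\<beta> \<in> T")
      case True
      then show ?thesis using \<open>\<forall>\<beta>\<in>T. R \<beta> \<alpha>\<close> by (simp add: R_def v_def)
    next
      case False
      then show ?thesis using \<open>f \<beta> \<noteq> 0\<close> \<open>\<alpha> \<in> T\<close> by (auto simp: T_def v_def)
    qed
  qed
  then show ?thesis
    using lt_exp_eqI[OF mo, of val r f \<alpha>] by simp
qed

lemma is_lt_exp_product_terms:
  assumes "is_lt_exp val le r f a\<^sub>0" "is_lt_exp val le r h b\<^sub>0" "f a \<noteq> 0" "h b \<noteq> 0"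
  shows "val_r val r (f a\<^sub>0) a\<^sub>0 + val_r val r (h b\<^sub>0) b\<^sub>0 < val_r val r (f a) a + val_r val r (h b) b \<or>
    (val_r val r (f a) a + val_r val r (h b) b = val_r val r (f a\<^sub>0) a\<^sub>0 + val_r val r (h b\<^sub>0) b\<^sub>0
      \<and> le a a\<^sub>0 \<and> le b b\<^sub>0)"
proof (cases "val_r val r (f a) a = val_r val r (f a\<^sub>0) a\<^sub>0 \<and> val_r val r (h b) b = val_r val r (h b\<^sub>0) b\<^sub>0")
  case True
  then show ?thesis
    using is_lt_exp_tie[OF assms(1,3)] is_lt_exp_tie[OF assms(2,4)] by simp
next
  case False
  then show ?thesis
    using is_lt_exp_minimal[OF assms(1,3)] is_lt_exp_minimal[OF assms(2,4)] by auto
qed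

context
  fixes val :: "'k::field \<Rightarrow> int" and le :: "('n::finite \<Rightarrow>\<^sub>0 nat) \<Rightarrow> ('n \<Rightarrow>\<^sub>0 nat) \<Rightarrow> bool"
    and r :: "'n \<Rightarrow> rat" and f h :: "('n, 'k) pseries" and a\<^sub>0 b\<^sub>0 :: "'n \<Rightarrow>\<^sub>0 nat"
  assumes val: "discrete_valuation val" and mo: "monomial_order le"
    and lt_f: "is_lt_exp val le r f a\<^sub>0" and lt_h: "is_lt_exp val le r h b\<^sub>0"
begin

lemma ps_mult_coeff_bound:
  assumes "ps_mult f h c \<noteq> 0"
  shows "val_r val r (f a\<^sub>0) a\<^sub>0 + val_r val r (h b\<^sub>0) b\<^sub>0 < val_r val r (ps_mult f h c) c \<or>
    (val_r val r (ps_mult f h c) c = val_r val r (f a\<^sub>0) a\<^sub>0 + val_r val r (h b\<^sub>0) b\<^sub>0 \<and> le c (a\<^sub>0 + b\<^sub>0))"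
proof -
  have "ps_mult f h c = (\<Sum>p\<in>{(a, b). a + b = c}. f (fst p) * h (snd p))"
    by (simp add: ps_mult_def)
  then obtain a b where ab: "a + b = c" "f a * h b \<noteq> 0" "val (f a * h b) \<le> val (ps_mult f h c)"
    using discrete_valuation_sum_witness[OF val finite_add_decompositions] assms by fastforce
  then have nonzero: "f a \<noteq> 0" "h b \<noteq> 0" by auto
  have "val_r val r (f a) a + val_r val r (h b) b \<le> val_r val r (ps_mult f h c) c"
    using ab val_r_mult[OF val nonzero, of r a b] by (simp add: val_r_def)
  then show ?thesis
    using is_lt_exp_product_terms[OF lt_f lt_h nonzero] monomial_order_add_mono[OF mo, of a a\<^sub>0 b b\<^sub>0] ab(1)
    by auto
qed

lemma ps_mult_coeff_lt_exp:
  "ps_mult f h (a\<^sub>0 + b\<^sub>0) \<noteq> 0 \<and>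
    val_r val r (ps_mult f h (a\<^sub>0 + b\<^sub>0)) (a\<^sub>0 + b\<^sub>0) = val_r val r (f a\<^sub>0) a\<^sub>0 + val_r val r (h b\<^sub>0) b\<^sub>0"
proof -
  let ?y = "\<lambda>p. f (fst p) * h (snd p)"
  define I where "I = {(a, b). a + b = a\<^sub>0 + b\<^sub>0} - {(a\<^sub>0, b\<^sub>0)}"
  have "finite I"
    unfolding I_def using finite_add_decompositions by blast
  have coeff: "ps_mult f h (a\<^sub>0 + b\<^sub>0) = f a\<^sub>0 * h b\<^sub>0 + sum ?y I"
    using sum.remove[OF finite_add_decompositions, where x = "(a\<^sub>0, b\<^sub>0)" and g = ?y] by (simp add: ps_mult_def I_def)
  have f0: "f a\<^sub>0 \<noteq> 0" and h0: "h b\<^sub>0 \<noteq> 0"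
    using lt_f lt_h by (simp_all add: is_lt_exp_nonzero)
  have "\<forall>p\<in>I. ?y p = 0 \<or> val (f a\<^sub>0 * h b\<^sub>0) < val (?y p)"
  proof
    fix p assume "p \<in> I"
    then obtain a b where p: "p = (a, b)" "a + b = a\<^sub>0 + b\<^sub>0" "(a, b) \<noteq> (a\<^sub>0, b\<^sub>0)"
      by (auto simp: I_def)
    show "?y p = 0 \<or> val (f a\<^sub>0 * h b\<^sub>0) < val (?y p)"
    proof (cases "f a = 0 \<or> h b = 0")
      case False
      then have "val_r val r (f a\<^sub>0) a\<^sub>0 + val_r val r (h b\<^sub>0) b\<^sub>0 < val_r val r (f a) a + val_r val r (h b) b"
        using is_lt_exp_product_terms[OF lt_f lt_h] monomial_order_add_mono_cancel[OF mo] p by blast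
      then have "val_r val r (f a\<^sub>0 * h b\<^sub>0) (a\<^sub>0 + b\<^sub>0) < val_r val r (f a * h b) (a + b)"
        using False by (simp add: val_r_mult[OF val] f0 h0)
      then show ?thesis
        using p by (simp add: val_r_def)
    qed (simp add: p)
  qed
  then have "sum ?y I = 0 \<or> val (f a\<^sub>0 * h b\<^sub>0) < val (sum ?y I)"
    by (rule discrete_valuation_sum_greater[OF val \<open>finite I\<close>])
  with f0 h0 have "f a\<^sub>0 * h b\<^sub>0 + sum ?y I \<noteq> 0 \<and> val (f a\<^sub>0 * h b\<^sub>0 + sum ?y I) = val (f a\<^sub>0 * h b\<^sub>0)"
    by (intro discrete_valuation_add_dominant[OF val]) simp_all
  then show ?thesis
    using val_r_mult[OF val f0 h0, of r a\<^sub>0 b\<^sub>0] by (simp add: coeff val_r_def)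
qed

lemma is_lt_exp_ps_mult: "is_lt_exp val le r (ps_mult f h) (a\<^sub>0 + b\<^sub>0)"
  unfolding is_lt_exp_def using ps_mult_coeff_lt_exp ps_mult_coeff_bound by auto

end

section \<open>Finiteness of the leading exponents\<close>

lemma vertex_in_rat_points:
  assumes "i < l"
  shows "s i \<in> rat_points (polyhedron l s)"
proof -
  have "(\<chi> v. of_rat (s i v)) \<in> (\<Union>i\<in>{..<l}. {(\<chi> v. of_rat (s i v)) + d | d. \<forall>v. d $ v \<le> (0::real)})"
    using assms by (intro UN_I[of i]) (auto intro!: exI[of _ 0])
  then show ?thesis
    unfolding rat_points_def polyhedron_def by (simp add: hull_inc)
qed

text \<open>
  As d \<ge> 0, the linear form d \<cdot> _ is bounded on s_i + R_{\<le>0}^n by its value at s_i; a strict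
  bound at all vertices would give a convex open halfspace containing P but not r.
\<close>

lemma dotp_le_vertex:
  assumes r: "r \<in> rat_points (polyhedron l s)"
  shows "\<exists>i<l. dotp r d \<le> dotp (s i) d"
proof (rule ccontr)
  assume "\<not> ?thesis"
  then have less: "dotp (s i) d < dotp r d" if "i < l" for i
    using that by (simp add: not_le)
  define a where "a = (\<chi> v. real (Poly_Mapping.lookup d v))"
  have inner: "a \<bullet> (\<chi> v. of_rat (x v)) = of_rat (dotp x d)" for x
    by (simp add: a_def inner_vec_def dotp_def of_rat_sum of_rat_mult mult.commute)
  have "polyhedron l s \<subseteq> {x. a \<bullet> x < of_rat (dotp r d)}"
    unfolding polyhedron_def
  proof (rule hull_minimal)
    show "convex {x. a \<bullet> x < of_rat (dotp r d)}"
      by (rule convex_halfspace_lt)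
    show "(\<Union>i\<in>{..<l}. {(\<chi> v. of_rat (s i v)) + e | e. \<forall>v. e $ v \<le> 0}) \<subseteq> {x. a \<bullet> x < of_rat (dotp r d)}"
    proof clarsimp
      fix i and e :: "real ^ 'a" assume "i < l" and "\<forall>v. e $ v \<le> 0"
      then have "a \<bullet> e \<le> 0"
        unfolding inner_vec_def a_def by (intro sum_nonpos) (auto intro: mult_nonneg_nonpos)
      moreover have "real_of_rat (dotp (s i) d) < real_of_rat (dotp r d)"
        using less[OF \<open>i < l\<close>] by (simp add: of_rat_less)
      ultimately show "a \<bullet> ((\<chi> v. of_rat (s i v)) + e) < of_rat (dotp r d)"
        by (simp add: inner_add_right inner)
    qed
  qed
  with r show False
    using inner[of r] by (auto simp: rat_points_def)
qed

lemma incseq_subseq_nat: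
  fixes h :: "nat \<Rightarrow> nat"
  shows "\<exists>\<phi>. strict_mono \<phi> \<and> incseq (h \<circ> \<phi>)"
proof -
  obtain \<phi> where \<phi>: "strict_mono \<phi>" "monoseq (h \<circ> \<phi>)"
    using seq_monosub[of h] by (auto simp: comp_def)
  show ?thesis
  proof (cases "incseq (h \<circ> \<phi>)")
    case False
    \<comment> \<open>a non-increasing sequence of naturals is constant from its minimum on\<close>
    with \<phi>(2) have dec: "decseq (h \<circ> \<phi>)"
      by (simp add: monoseq_iff)
    obtain N where N: "\<forall>n. h (\<phi> N) \<le> h (\<phi> n)"
      using ex_has_least_nat[of "\<lambda>_. True" 0 "h \<circ> \<phi>"] by auto
    have "h (\<phi> (n + N)) = h (\<phi> N)" for n
      using decseqD[OF dec le_add2[of N n]] N by (simp add: antisym)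
    then have "incseq (h \<circ> (\<phi> \<circ> (\<lambda>n. n + N)))"
      by (simp add: incseq_def)
    moreover have "strict_mono (\<phi> \<circ> (\<lambda>n. n + N))"
      using \<phi>(1) by (simp add: strict_mono_def)
    ultimately show ?thesis by blast
  qed (use \<phi> in blast)
qed

lemma dickson_subseq:
  fixes g :: "nat \<Rightarrow> ('n::finite \<Rightarrow>\<^sub>0 nat)"
  shows "\<exists>\<phi>. strict_mono \<phi> \<and> (\<forall>v. incseq (\<lambda>k. Poly_Mapping.lookup (g (\<phi> k)) v))"
proof -
  have "\<exists>\<phi>. strict_mono \<phi> \<and> (\<forall>v\<in>V. incseq (\<lambda>k. Poly_Mapping.lookup (g (\<phi> k)) v))"
    if "finite V" for V
    using that
  proof (induction V rule: finite_induct)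
    case empty
    have "strict_mono id" by (simp add: strict_mono_def)
    then show ?case by blast
  next
    case (insert v V)
    then obtain \<phi> where \<phi>: "strict_mono \<phi>" "\<forall>w\<in>V. incseq (\<lambda>k. Poly_Mapping.lookup (g (\<phi> k)) w)"
      by blast
    obtain \<psi> where \<psi>: "strict_mono \<psi>" "incseq ((\<lambda>k. Poly_Mapping.lookup (g (\<phi> k)) v) \<circ> \<psi>)"
      using incseq_subseq_nat by blast
    have "incseq (\<lambda>k. Poly_Mapping.lookup (g ((\<phi> \<circ> \<psi>) k)) w)" if "w \<in> insert v V" for w
    proof (cases "w = v")
      case False
      with that \<phi>(2) have "incseq (\<lambda>k. Poly_Mapping.lookup (g (\<phi> k)) w)" by simp
      then show ?thesis
        using \<psi>(1) by (simp add: incseq_def strict_mono_less_eq)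
    qed (use \<psi>(2) in \<open>simp add: comp_def\<close>)
    then show ?case
      using strict_mono_o[OF \<phi>(1) \<psi>(1)] by blast
  qed
  from this[of UNIV] show ?thesis by simp
qed

lemma lt_exp_vertex_bound:
  assumes r: "r \<in> rat_points (polyhedron l s)" and lt: "is_lt_exp val le r f \<alpha>"
    and "f \<beta> \<noteq> 0" and "\<forall>v. Poly_Mapping.lookup \<beta> v \<le> Poly_Mapping.lookup \<alpha> v"
  shows "\<exists>i<l. val_r val (s i) (f \<alpha>) \<alpha> \<le> val_r val (s i) (f \<beta>) \<beta>"
proof -
  define \<delta> where "\<delta> = \<alpha> - \<beta>"
  have \<alpha>: "\<alpha> = \<beta> + \<delta>"
    unfolding \<delta>_def using assms(4) by (rule add_diff_of_lookup_le)
  obtain i where i: "i < l" "dotp r \<delta> \<le> dotp (s i) \<delta>"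
    using dotp_le_vertex[OF r] by blast
  have "val_r val r (f \<alpha>) \<alpha> \<le> val_r val r (f \<beta>) \<beta>"
    using lt assms(3) by (rule is_lt_exp_minimal)
  then have "val_r val (s i) (f \<alpha>) \<alpha> \<le> val_r val (s i) (f \<beta>) \<beta>"
    using i(2) unfolding \<alpha> val_r_def dotp_add by linarith
  with i(1) show ?thesis by blast
qed

lemma finite_lt_exps:
  fixes f :: "('n::finite, 'k::field) pseries"
  assumes mo: "monomial_order le"
    and f: "f \<in> conv_series val (rat_points (polyhedron l s))" "f \<noteq> (\<lambda>_. 0)"
  shows "finite {lt_exp val le r f | r. r \<in> rat_points (polyhedron l s)}"
proof (rule ccontr)
  let ?P = "rat_points (polyhedron l s)"
  assume "infinite {lt_exp val le r f | r. r \<in> ?P}"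
  then obtain g :: "nat \<Rightarrow> _" where g: "inj g" "range g \<subseteq> {lt_exp val le r f | r. r \<in> ?P}"
    using infinite_countable_subset by blast
  have lead: "\<exists>r\<in>?P. is_lt_exp val le r f (g k)" for k
  proof -
    obtain r where r: "r \<in> ?P" "g k = lt_exp val le r f"
      using g(2) by blast
    with is_lt_exp_lt_exp[OF mo f(1) r(1) f(2)] show ?thesis by auto
  qed
  obtain \<phi> where \<phi>: "strict_mono \<phi>" "\<forall>v. incseq (\<lambda>k. Poly_Mapping.lookup (g (\<phi> k)) v)"
    using dickson_subseq by blast
  define \<beta> where "\<beta> = g (\<phi> 0)"
  have "f \<beta> \<noteq> 0"
    unfolding \<beta>_def using lead[of "\<phi> 0"] by (auto dest: is_lt_exp_nonzero)
  define S where "S = (\<Union>i<l. {\<gamma>. f \<gamma> \<noteq> 0 \<and> val_r val (s i) (f \<gamma>) \<gamma> \<le> val_r val (s i) (f \<beta>) \<beta>})"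
  have "finite S"
    unfolding S_def
    by (intro finite_UN_I finite_lessThan finite_val_r_le[OF f(1)] vertex_in_rat_points) simp
  moreover have "range (g \<circ> \<phi>) \<subseteq> S"
  proof (rule image_subsetI)
    fix k
    obtain r where r: "r \<in> ?P" and lt: "is_lt_exp val le r f (g (\<phi> k))"
      using lead by blast
    have "\<forall>v. Poly_Mapping.lookup \<beta> v \<le> Poly_Mapping.lookup (g (\<phi> k)) v"
      using incseqD[OF \<phi>(2)[rule_format], of 0 k] unfolding \<beta>_def by simp
    from lt_exp_vertex_bound[OF r lt \<open>f \<beta> \<noteq> 0\<close> this] show "(g \<circ> \<phi>) k \<in> S"
      using is_lt_exp_nonzero[OF lt] by (auto simp: S_def)
  qed
  moreover have "infinite (range (g \<circ> \<phi>))"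
    using inj_compose[OF g(1) strict_mono_imp_inj_on[OF \<phi>(1)]] by (rule range_inj_infinite)
  ultimately show False
    using finite_subset by blast
qed

section \<open>Leading-term ideals of principal ideals\<close>

lemma monomial_series_conv:
  fixes \<beta> :: "'n::finite \<Rightarrow>\<^sub>0 nat"
  shows "(\<lambda>\<gamma>. if \<gamma> = \<beta> then c else 0) \<in> conv_series val P"
  unfolding conv_series_def
proof (intro CollectI ballI allI exI[of _ "Suc (total_deg \<beta>)"] impI)
  fix \<alpha> :: "'n \<Rightarrow>\<^sub>0 nat" and M :: rat
  assume "Suc (total_deg \<beta>) \<le> total_deg \<alpha>" and "(if \<alpha> = \<beta> then c else 0) \<noteq> 0"
  then show "M < val_r val r ((\<lambda>\<gamma>. if \<gamma> = \<beta> then c else 0) \<alpha>) \<alpha>" for r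
    by (simp split: if_splits)
qed

lemma ps_mult_monomial_coeff:
  fixes \<alpha> \<beta> :: "'n::finite \<Rightarrow>\<^sub>0 nat"
  shows "ps_mult f (\<lambda>\<gamma>. if \<gamma> = \<beta> then c else 0) (\<alpha> + \<beta>) = f \<alpha> * c"
proof -
  have "ps_mult f (\<lambda>\<gamma>. if \<gamma> = \<beta> then c else 0) (\<alpha> + \<beta>)
      = (\<Sum>p\<in>{(a, b). a + b = \<alpha> + \<beta>}. if p = (\<alpha>, \<beta>) then f \<alpha> * c else 0)"
    unfolding ps_mult_def by (rule sum.cong) auto
  also have "\<dots> = f \<alpha> * c"
    by (simp add: sum.delta[OF finite_add_decompositions])
  finally show ?thesis .
qed

lemma LT_principal_ideal_generators:
  fixes f :: "('n::finite, 'k::field) pseries"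
  assumes val: "discrete_valuation val" and mo: "monomial_order le"
    and f: "f \<in> conv_series val P" "f \<noteq> (\<lambda>_. 0)" and r: "r \<in> P"
  shows "{LT val le r g | g. g \<in> principal_ideal val P f \<and> g \<noteq> (\<lambda>_. 0)}
       = {Poly_Mapping.single (lt_exp val le r f + \<beta>) c | \<beta> c. c \<noteq> 0}"
proof -
  define \<alpha> where "\<alpha> = lt_exp val le r f"
  have lt_f: "is_lt_exp val le r f \<alpha>"
    unfolding \<alpha>_def using mo f(1) r f(2) by (rule is_lt_exp_lt_exp)
  show ?thesis
  proof (intro equalityI subsetI)
    fix x :: "('n \<Rightarrow>\<^sub>0 nat) \<Rightarrow>\<^sub>0 'k" assume "x \<in> {LT val le r g | g. g \<in> principal_ideal val P f \<and> g \<noteq> (\<lambda>_. 0)}"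
    then obtain h where x: "x = LT val le r (ps_mult f h)"
      and h: "h \<in> conv_series val P" "ps_mult f h \<noteq> (\<lambda>_. 0)"
      unfolding principal_ideal_def by blast
    then have "h \<noteq> (\<lambda>_. 0)"
      by (auto simp: ps_mult_def)
    with h(1) r have lt: "is_lt_exp val le r (ps_mult f h) (\<alpha> + lt_exp val le r h)"
      by (intro is_lt_exp_ps_mult[OF val mo lt_f] is_lt_exp_lt_exp[OF mo])
    then show "x \<in> {Poly_Mapping.single (lt_exp val le r f + \<beta>) c | \<beta> c. c \<noteq> 0}"
      unfolding x LT_def lt_exp_eqI[OF mo lt] \<alpha>_def[symmetric] by (blast dest: is_lt_exp_nonzero)
  next
    fix x :: "('n \<Rightarrow>\<^sub>0 nat) \<Rightarrow>\<^sub>0 'k" assume "x \<in> {Poly_Mapping.single (lt_exp val le r f + \<beta>) c | \<beta> c. c \<noteq> 0}"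
    then obtain \<beta> c where x: "x = Poly_Mapping.single (\<alpha> + \<beta>) c" and "c \<noteq> 0"
      unfolding \<alpha>_def by blast
    define h where "h = (\<lambda>\<gamma>. if \<gamma> = \<beta> then c / f \<alpha> else 0)"
    have "f \<alpha> \<noteq> 0"
      using lt_f by (rule is_lt_exp_nonzero)
    with \<open>c \<noteq> 0\<close> have "is_lt_exp val le r h \<beta>"
      unfolding is_lt_exp_def h_def by (simp add: monomial_order_refl[OF mo])
    then have lt: "is_lt_exp val le r (ps_mult f h) (\<alpha> + \<beta>)"
      by (rule is_lt_exp_ps_mult[OF val mo lt_f])
    have "ps_mult f h (\<alpha> + \<beta>) = c"
      unfolding h_def ps_mult_monomial_coeff using \<open>f \<alpha> \<noteq> 0\<close> by simp
    then have "x = LT val le r (ps_mult f h)"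
      unfolding x LT_def lt_exp_eqI[OF mo lt] by simp
    moreover have "ps_mult f h \<in> principal_ideal val P f"
      unfolding principal_ideal_def h_def using monomial_series_conv by blast
    moreover have "ps_mult f h \<noteq> (\<lambda>_. 0)"
      using is_lt_exp_nonzero[OF lt] by auto
    ultimately show "x \<in> {LT val le r g | g. g \<in> principal_ideal val P f \<and> g \<noteq> (\<lambda>_. 0)}"
      by blast
  qed
qed

theorem mainTheorem13:
  fixes val :: "'k::field \<Rightarrow> int"
    and le :: "('n::finite \<Rightarrow>\<^sub>0 nat) \<Rightarrow> ('n \<Rightarrow>\<^sub>0 nat) \<Rightarrow> bool"
    and l :: nat and s :: "nat \<Rightarrow> 'n \<Rightarrow> rat"
    and f :: "('n, 'k) pseries"
  assumes "discrete_valuation val" and "val_complete val"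
    and "monomial_order le"
    and "f \<in> conv_series val (rat_points (polyhedron l s))"
  shows "finite {LT_ideal val le r (principal_ideal val (rat_points (polyhedron l s)) f) | r.
                  r \<in> rat_points (polyhedron l s)}"
proof (cases "f = (\<lambda>_. 0)")
  case True
  then have "LT_ideal val le r (principal_ideal val (rat_points (polyhedron l s)) f) = ideal_gen {}" for r
    by (simp add: LT_ideal_def principal_ideal_def ps_mult_def)
  then show ?thesis
    by simp
next
  case False
  let ?P = "rat_points (polyhedron l s)"
  let ?monomial_ideal = "\<lambda>\<alpha>. ideal_gen {Poly_Mapping.single (\<alpha> + \<beta>) c | \<beta> c. c \<noteq> 0}"
  have "LT_ideal val le r (principal_ideal val ?P f) = ?monomial_ideal (lt_exp val le r f)" if "r \<in> ?P" for r
    unfolding LT_ideal_def using LT_principal_ideal_generators[OF assms(1,3,4) False that] by simp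
  then have "{LT_ideal val le r (principal_ideal val ?P f) | r. r \<in> ?P}
      \<subseteq> ?monomial_ideal ` {lt_exp val le r f | r. r \<in> ?P}"
    by blast
  moreover have "finite {lt_exp val le r f | r. r \<in> ?P}"
    using assms(3,4) False by (rule finite_lt_exps)
  ultimately show ?thesis
    by (meson finite_imageI finite_subset)
qed

end
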